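(* Let $(\Omega,\Sigma,\mathbb{P})$ be a probability space, let $\gamma<0$, and let $W_t:\Omega\to(0,\infty)$, $t\in\mathbb{N}$, be random variables with $E[W_t^\gamma]<\infty$ for all $t$. Define $$C:=\liminf_{t\to\infty}\frac{1}{t}\,\frac{1}{\gamma}\log\big(E[W_t^\gamma]\big).$$ Then $$\liminf_{t\to\infty}\frac{1}{t}\log W_t\geq C\quad\text{almost surely.}$$ Moreover, if $C>0$, then for every $b\in[0,\infty)$ the hitting time $T_b:=\inf\{t\in\mathbb{N}: W_t>b\}$ is integrable and $$\limsup_{b\to+\infty}\frac{E[T_b]}{\log b}\leq\frac{1}{C}.$$
   Context: $\log$ is the natural logarithm. $C$ takes values in $[-\infty,+\infty]$; if $C=+\infty$ then $1/C:=0$. *)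

theory Defs
  imports "HOL-Probability.Probability"
begin

text \<open>Hitting time T_b = inf {t \<in> \<nat>. W_t > b}, with inf of the empty set = +\<infinity>,
  as an ennreal-valued function (so integrability = finite nonnegative integral).\<close>
definition hitting_time :: "(nat \<Rightarrow> 'a \<Rightarrow> real) \<Rightarrow> real \<Rightarrow> 'a \<Rightarrow> ennreal" where
  "hitting_time W b \<omega> =
     (if \<exists>t. W t \<omega> > b then of_nat (LEAST t. W t \<omega> > b) else \<infinity>)"

end

theory Submission
  imports Defs
begin

text \<open>
  Everything rests on the Markov inequality for the negative moment,
  \<open>P(W\<^sub>t \<le> B) \<le> E[W\<^sub>t\<^sup>\<gamma>] B\<^sup>-\<^sup>\<gamma>\<close>, together with the bound
  \<open>E[W\<^sub>t\<^sup>\<gamma>] \<le> K e\<^sup>c\<^sup>\<gamma>\<^sup>t\<close> valid for every \<open>c < C\<close>.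
  Taking \<open>B = e\<^sup>q\<^sup>t\<close> with \<open>q < c\<close> makes \<open>P(log W\<^sub>t < q t)\<close> geometrically summable, so by
  Borel--Cantelli \<open>log W\<^sub>t \<ge> q t\<close> eventually, almost surely; letting \<open>q\<close> run through the
  rationals below \<open>C\<close> gives the liminf bound.
  For the hitting time, \<open>E[T\<^sub>b] = \<Sum>\<^sub>t P(T\<^sub>b > t) \<le> \<Sum>\<^sub>t min 1 (K b\<^sup>-\<^sup>\<gamma> e\<^sup>c\<^sup>\<gamma>\<^sup>t)\<close>; the first
  \<open>log b / c + O(1)\<close> terms are bounded by 1 and the rest form a geometric tail, so
  \<open>E[T\<^sub>b] \<le> log b / c + D\<close>. Letting \<open>c \<rightarrow> C\<close> gives the limsup bound.
\<close>

lemma hitting_time_eq_suminf_indicator: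
  "hitting_time W b \<omega> = (\<Sum>t. indicator {\<omega>. \<forall>s\<le>t. W s \<omega> \<le> b} \<omega>)"
proof (cases "\<exists>t. W t \<omega> > b")
  case True
  define T where "T = (LEAST t. W t \<omega> > b)"
  have "W T \<omega> > b"
    unfolding T_def using LeastI_ex[OF True] .
  then have indicator_eq:
    "indicator {\<omega>. \<forall>s\<le>t. W s \<omega> \<le> b} \<omega> = (if t < T then 1 else (0::ennreal))" for t
    using not_less_Least[of _ "\<lambda>t. W t \<omega> > b"] unfolding T_def[symmetric]
    by (auto simp: indicator_def not_less intro: le_less_trans)
  have "(\<Sum>t. indicator {\<omega>. \<forall>s\<le>t. W s \<omega> \<le> b} \<omega>) = (\<Sum>t<T. (1::ennreal))"
    unfolding indicator_eq by (subst suminf_finite[of "{..<T}"]) auto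
  then show ?thesis
    using True by (simp add: hitting_time_def T_def)
next
  case False
  have "of_nat n \<le> (\<Sum>t::nat. 1::ennreal)" for n
    using sum_le_suminf[of "\<lambda>_. 1::ennreal" "{..<n}"] by simp
  then have "(\<Sum>t::nat. 1::ennreal) = \<infinity>"
    by (metis ennreal_Ex_less_of_nat infinity_ennreal_def not_le top.not_eq_extremum)
  with False show ?thesis
    by (simp add: hitting_time_def not_less)
qed

lemma borel_measurable_hitting_time [measurable]:
  assumes [measurable]: "\<And>t. W t \<in> borel_measurable M"
  shows "hitting_time W b \<in> borel_measurable M"
  unfolding hitting_time_eq_suminf_indicator[abs_def] by measurable

lemma le_const_mult_if_eventually_le:
  fixes f g :: "nat \<Rightarrow> real"
  assumes "eventually (\<lambda>t. f t \<le> g t) sequentially" and "\<And>t. g t > 0"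
  shows "\<exists>K\<ge>1. \<forall>t. f t \<le> K * g t"
proof -
  obtain N where N: "\<And>t. t \<ge> N \<Longrightarrow> f t \<le> g t"
    using assms(1) unfolding eventually_sequentially by blast
  define K where "K = max 1 (Max ((\<lambda>t. f t / g t) ` {..N}))"
  have "K \<ge> 1"
    unfolding K_def by simp
  moreover have "f t \<le> K * g t" for t
  proof (cases "t \<le> N")
    case True
    then have "f t / g t \<le> K"
      unfolding K_def by (intro max.coboundedI2 Max_ge) auto
    then show ?thesis
      using assms(2) by (simp add: divide_le_eq)
  next
    case False
    then have "f t \<le> 1 * g t"
      using N by simp
    also have "\<dots> \<le> K * g t"
      using assms(2)[of t] unfolding K_def by (intro mult_right_mono) auto
    finally show ?thesis .
  qed
  ultimately show ?thesis
    by blast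
qed

lemma le_const_mult_exp_if_less_liminf:
  fixes m :: "nat \<Rightarrow> real"
  assumes "\<gamma> < 0" "\<And>t. m t > 0"
    and "ereal c < liminf (\<lambda>t. ereal (1 / real t * (1 / \<gamma>) * ln (m t)))"
  shows "\<exists>K\<ge>1. \<forall>t. m t \<le> K * exp (c * \<gamma> * real t)"
proof (rule le_const_mult_if_eventually_le)
  show "eventually (\<lambda>t. m t \<le> exp (c * \<gamma> * real t)) sequentially"
    using less_LiminfD[OF assms(3)] eventually_gt_at_top[of 0]
  proof eventually_elim
    case (elim t)
    have "real t * \<gamma> < 0"
      using elim assms(1) by (simp add: mult_pos_neg)
    with elim have "ln (m t) < c * \<gamma> * real t"
      by (simp add: neg_less_divide_eq mult_ac)
    then show ?case
      using assms(2)[of t] by (metis exp_ln exp_less_cancel_iff less_imp_le)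
  qed
qed simp

lemma suminf_min_one_exp_le:
  fixes \<alpha> X :: real
  assumes "\<alpha> > 0" "X \<ge> 1"
  shows "summable (\<lambda>t. min 1 (X * exp (-\<alpha> * real t)))"
    and "(\<Sum>t. min 1 (X * exp (-\<alpha> * real t))) \<le> ln X / \<alpha> + 1 + 1 / (1 - exp (-\<alpha>))"
proof -
  define q where "q = exp (-\<alpha>)"
  have q: "0 < q" "q < 1"
    using assms(1) by (auto simp: q_def)
  have exp_q: "exp (-\<alpha> * real t) = q ^ t" for t
    unfolding q_def by (metis exp_of_nat_mult mult.commute)
  define f where "f t = min 1 (X * q ^ t)" for t
  have "summable (\<lambda>t. X * q ^ t)"
    using q by (intro summable_mult summable_geometric) auto
  then have summable_f: "summable f"
    by (rule summable_comparison_test[rotated]) (use assms(2) q in \<open>auto simp: f_def abs_of_nonneg\<close>)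
  then show "summable (\<lambda>t. min 1 (X * exp (-\<alpha> * real t)))"
    unfolding f_def exp_q .
  \<comment> \<open>Bound the first \<open>N \<approx> ln X / \<alpha>\<close> terms by 1 and the tail by a geometric series.\<close>
  define N where "N = nat \<lceil>ln X / \<alpha>\<rceil>"
  have "ln X / \<alpha> \<ge> 0"
    using assms by simp
  then have N: "ln X / \<alpha> \<le> real N" "real N \<le> ln X / \<alpha> + 1"
    unfolding N_def by linarith+
  have "ln (X * q ^ N) = ln X - \<alpha> * real N"
    using assms(2) q by (simp add: ln_mult ln_realpow q_def)
  also have "\<dots> \<le> 0"
    using N(1) assms(1) by (simp add: field_simps)
  finally have XqN: "X * q ^ N \<le> 1"
    using assms(2) q by (simp add: ln_le_zero_iff)
  have "(\<Sum>t. f t) = (\<Sum>t. f (t + N)) + (\<Sum>t<N. f t)"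
    using summable_f by (rule suminf_split_initial_segment)
  also have "(\<Sum>t<N. f t) \<le> real N"
    using sum_bounded_above[of "{..<N}" f 1] by (simp add: f_def)
  also have "(\<Sum>t. f (t + N)) \<le> (\<Sum>t. q ^ t)"
  proof (rule suminf_le)
    show "f (t + N) \<le> q ^ t" for t
    proof -
      have "f (t + N) \<le> (X * q ^ N) * q ^ t"
        by (simp add: f_def power_add mult_ac)
      also have "\<dots> \<le> q ^ t"
        using XqN q by (simp add: mult_left_le_one_le)
      finally show ?thesis .
    qed
    show "summable (\<lambda>t. f (t + N))"
      using summable_f by (subst summable_iff_shift)
    show "summable (\<lambda>t. q ^ t)"
      using q by (intro summable_geometric) auto
  qed
  also have "(\<Sum>t. q ^ t) = 1 / (1 - q)"
    using q by (simp add: suminf_geometric)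
  finally show "(\<Sum>t. min 1 (X * exp (-\<alpha> * real t))) \<le> ln X / \<alpha> + 1 + 1 / (1 - exp (-\<alpha>))"
    using N(2) unfolding f_def q_def exp_q by linarith
qed

lemma Limsup_div_ln_le:
  fixes g :: "real \<Rightarrow> real"
  assumes "c > 0" and bound: "\<And>b. b \<ge> 1 \<Longrightarrow> g b \<le> ln b / c + D"
  shows "Limsup at_top (\<lambda>b. ereal (g b / ln b)) \<le> ereal (1 / c)"
proof -
  have "eventually (\<lambda>b. ereal (g b / ln b) \<le> ereal (1 / c + D / ln b)) at_top"
    using eventually_gt_at_top[of 1]
  proof eventually_elim
    case (elim b)
    then have "ln b > 0"
      by simp
    with bound[of b] elim have "g b / ln b \<le> (ln b / c + D) / ln b"
      by (simp add: divide_right_mono)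
    with \<open>ln b > 0\<close> show ?case
      by (simp add: add_divide_distrib)
  qed
  then have "Limsup at_top (\<lambda>b. ereal (g b / ln b)) \<le> Limsup at_top (\<lambda>b. ereal (1 / c + D / ln b))"
    by (rule Limsup_mono)
  also have "\<dots> = ereal (1 / c)"
  proof (rule lim_imp_Limsup)
    have "((\<lambda>b. D / ln b) \<longlongrightarrow> 0) at_top"
      by (intro tendsto_divide_0[OF tendsto_const] filterlim_at_top_imp_at_infinity ln_at_top)
    then show "((\<lambda>b. ereal (1 / c + D / ln b)) \<longlongrightarrow> ereal (1 / c)) at_top"
      using tendsto_add[OF tendsto_const, of _ 0 at_top "1 / c"] by (simp add: lim_ereal)
  qed simp
  finally show ?thesis .
qed

lemma ereal_le_if_rat_less_imp_le:
  fixes x y :: ereal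
  assumes "\<And>q. q \<in> \<rat> \<Longrightarrow> ereal q < x \<Longrightarrow> ereal q \<le> y"
  shows "x \<le> y"
proof (rule ccontr)
  assume "\<not> x \<le> y"
  then have "y < x"
    by simp
  then obtain z where z: "y < ereal z" "ereal z < x"
    using ereal_dense2 by blast
  then obtain z' where z': "ereal z < ereal z'" "ereal z' < x"
    using ereal_dense2 by blast
  then obtain q where q: "q \<in> \<rat>" "z < q" "q < z'"
    using Rats_dense_in_real by auto
  have "ereal q < x"
    using q(3) z'(2) order.strict_trans[of "ereal q" "ereal z'" x] by simp
  with q(1) have "ereal q \<le> y"
    by (rule assms)
  moreover have "y < ereal q"
    using z(1) q(2) order.strict_trans[of y "ereal z" "ereal q"] by simp
  ultimately show False
    by simp
qed

lemma ereal_le_inverse_if_le_inverse_below: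
  fixes C L :: ereal
  assumes "C > 0" and le: "\<And>c. 0 < c \<Longrightarrow> ereal c < C \<Longrightarrow> L \<le> ereal (1 / c)"
  shows "L \<le> inverse C"
proof (rule ccontr)
  assume "\<not> L \<le> inverse C"
  then have "inverse C < L"
    by simp
  then obtain y where y: "inverse C < ereal y" "ereal y < L"
    using ereal_dense2 by blast
  have "0 \<le> inverse C"
    using assms(1) by (simp add: ereal_inverse_nonneg_iff less_imp_le)
  with y(1) have "y > 0"
    by (metis ereal_less(2) order_le_less_trans zero_ereal_def)
  have "ereal (1 / y) < C"
  proof (cases C)
    case (real r)
    with assms(1) y(1) \<open>y > 0\<close> show ?thesis
      by (simp add: inverse_eq_divide field_simps)
  qed (use assms(1) in auto)
  with \<open>y > 0\<close> have "L \<le> ereal y"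
    using le[of "1 / y"] by simp
  with y(2) show False
    by simp
qed

lemma measure_le_integral_powr_neg:
  fixes X :: "'a \<Rightarrow> real"
  assumes "\<gamma> < 0" "B > 0" "\<And>\<omega>. \<omega> \<in> space M \<Longrightarrow> X \<omega> > 0"
    and "integrable M (\<lambda>\<omega>. X \<omega> powr \<gamma>)"
  shows "measure M {\<omega>\<in>space M. X \<omega> \<le> B} \<le> (\<integral>\<omega>. X \<omega> powr \<gamma> \<partial>M) * B powr (-\<gamma>)"
proof -
  have "X \<omega> \<le> B \<longleftrightarrow> B powr \<gamma> \<le> X \<omega> powr \<gamma>" if "\<omega> \<in> space M" for \<omega>
    using powr_mono2'[of \<gamma> "X \<omega>" B] powr_less_mono2_neg[of \<gamma> B "X \<omega>"] assms(1,2) assms(3)[OF that]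
    by force
  then have "{\<omega>\<in>space M. X \<omega> \<le> B} = {\<omega>\<in>space M. X \<omega> powr \<gamma> \<ge> B powr \<gamma>}"
    by auto
  also have "measure M \<dots> \<le> (\<integral>\<omega>. X \<omega> powr \<gamma> \<partial>M) / B powr \<gamma>"
    using assms(2,4) by (intro integral_Markov_inequality_measure) auto
  finally show ?thesis
    by (simp add: powr_minus divide_inverse)
qed

lemma (in finite_measure) AE_eventually_ln_ge:
  assumes "\<gamma> < 0" "q < r"
    and [measurable]: "\<And>t. W t \<in> borel_measurable M"
    and pos: "\<And>t \<omega>. \<omega> \<in> space M \<Longrightarrow> W t \<omega> > 0"
    and int: "\<And>t. integrable M (\<lambda>\<omega>. W t \<omega> powr \<gamma>)"
    and moment: "\<And>t. (\<integral>\<omega>. W t \<omega> powr \<gamma> \<partial>M) \<le> K * exp (r * \<gamma> * real t)"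
  shows "AE \<omega> in M. eventually (\<lambda>t. q * real t \<le> ln (W t \<omega>)) sequentially"
proof -
  define A where "A t = {\<omega>\<in>space M. ln (W t \<omega>) < q * real t}" for t
  have [measurable]: "A t \<in> sets M" for t
    unfolding A_def by measurable
  have measure_A: "measure M (A t) \<le> K * exp (\<gamma> * (r - q)) ^ t" for t
  proof -
    have "W t \<omega> \<le> exp (q * real t)" if "\<omega> \<in> space M" "ln (W t \<omega>) < q * real t" for \<omega>
      using that pos[OF that(1)] by (metis exp_less_cancel_iff exp_ln less_imp_le)
    then have "A t \<subseteq> {\<omega>\<in>space M. W t \<omega> \<le> exp (q * real t)}"
      by (auto simp: A_def)
    then have "measure M (A t) \<le> measure M {\<omega>\<in>space M. W t \<omega> \<le> exp (q * real t)}"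
      by (intro finite_measure_mono) auto
    also have "\<dots> \<le> (\<integral>\<omega>. W t \<omega> powr \<gamma> \<partial>M) * exp (q * real t) powr (-\<gamma>)"
      using assms(1) pos int by (intro measure_le_integral_powr_neg) auto
    also have "\<dots> \<le> K * exp (r * \<gamma> * real t) * exp (q * real t) powr (-\<gamma>)"
      using moment by (intro mult_right_mono) auto
    also have "\<dots> = K * exp (\<gamma> * (r - q)) ^ t"
    proof -
      have "exp (r * \<gamma> * real t) * exp (q * real t) powr (-\<gamma>) = exp (real t * (\<gamma> * (r - q)))"
        unfolding powr_def by (simp add: mult_exp_exp algebra_simps)
      then show ?thesis
        by (simp add: exp_of_nat_mult[symmetric])
    qed
    finally show ?thesis .
  qed
  have "summable (\<lambda>t. K * exp (\<gamma> * (r - q)) ^ t)"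
    using assms(1,2) by (intro summable_mult summable_geometric) (simp add: mult_neg_pos)
  then have "summable (\<lambda>t. measure M (A t))"
    by (rule summable_comparison_test') (use measure_A in simp)
  then have "AE \<omega> in M. eventually (\<lambda>t. \<omega> \<in> space M - A t) sequentially"
    by (intro borel_cantelli_AE1) (auto simp: emeasure_eq_measure)
  then show ?thesis
    by (rule AE_mp) (auto elim!: eventually_mono simp: A_def not_less)
qed

lemma (in finite_measure) AE_liminf_ln_ge:
  assumes "\<gamma> < 0"
    and [measurable]: "\<And>t. W t \<in> borel_measurable M"
    and "\<And>t \<omega>. \<omega> \<in> space M \<Longrightarrow> W t \<omega> > 0"
    and "\<And>t. integrable M (\<lambda>\<omega>. W t \<omega> powr \<gamma>)"
    and moment: "\<And>r. ereal r < C \<Longrightarrow> \<exists>K. \<forall>t. (\<integral>\<omega>. W t \<omega> powr \<gamma> \<partial>M) \<le> K * exp (r * \<gamma> * real t)"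
  shows "AE \<omega> in M. C \<le> liminf (\<lambda>t. ereal (1 / real t * ln (W t \<omega>)))"
proof -
  have "AE \<omega> in M. eventually (\<lambda>t. q * real t \<le> ln (W t \<omega>)) sequentially"
    if q_less: "ereal q < C" for q
  proof -
    obtain r where "ereal q < ereal r" "ereal r < C"
      using ereal_dense2[OF q_less] by blast
    with moment obtain K where "\<And>t. (\<integral>\<omega>. W t \<omega> powr \<gamma> \<partial>M) \<le> K * exp (r * \<gamma> * real t)"
      by blast
    then show ?thesis
      using \<open>ereal q < ereal r\<close> assms(1-4) by (intro AE_eventually_ln_ge[where r = r and K = K]) simp_all
  qed
  then have "AE \<omega> in M. \<forall>q\<in>\<rat>. ereal q < C \<longrightarrow> eventually (\<lambda>t. q * real t \<le> ln (W t \<omega>)) sequentially"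
    by (subst AE_ball_countable) (auto simp: countable_rat)
  then show ?thesis
  proof (rule AE_mp, intro AE_I2 impI)
    fix \<omega>
    assume growth: "\<forall>q\<in>\<rat>. ereal q < C \<longrightarrow> eventually (\<lambda>t. q * real t \<le> ln (W t \<omega>)) sequentially"
    show "C \<le> liminf (\<lambda>t. ereal (1 / real t * ln (W t \<omega>)))"
    proof (rule ereal_le_if_rat_less_imp_le)
      fix q :: real
      assume "q \<in> \<rat>" "ereal q < C"
      with growth have "eventually (\<lambda>t. q * real t \<le> ln (W t \<omega>)) sequentially"
        by blast
      then have "eventually (\<lambda>t. ereal q \<le> ereal (1 / real t * ln (W t \<omega>))) sequentially"
        using eventually_gt_at_top[of 0] by eventually_elim (simp add: field_simps)
      then show "ereal q \<le> liminf (\<lambda>t. ereal (1 / real t * ln (W t \<omega>)))"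
        by (rule Liminf_bounded)
    qed
  qed
qed

lemma (in prob_space) nn_integral_hitting_time_le:
  assumes "\<gamma> < 0" "c > 0" "K \<ge> 1"
    and [measurable]: "\<And>t. W t \<in> borel_measurable M"
    and pos: "\<And>t \<omega>. \<omega> \<in> space M \<Longrightarrow> W t \<omega> > 0"
    and int: "\<And>t. integrable M (\<lambda>\<omega>. W t \<omega> powr \<gamma>)"
    and moment: "\<And>t. (\<integral>\<omega>. W t \<omega> powr \<gamma> \<partial>M) \<le> K * exp (c * \<gamma> * real t)"
  shows "\<exists>D\<ge>0. \<forall>b. (\<integral>\<^sup>+\<omega>. hitting_time W b \<omega> \<partial>M) \<le> ennreal (ln (max b 1) / c + D)"
proof -
  define \<alpha> where "\<alpha> = - c * \<gamma>"
  have "\<alpha> > 0"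
    unfolding \<alpha>_def using assms(1,2) by (simp add: mult_pos_neg)
  define D where "D = ln K / \<alpha> + 1 + 1 / (1 - exp (-\<alpha>))"
  have "D \<ge> 0"
    unfolding D_def using \<open>\<alpha> > 0\<close> assms(3) by (simp add: add_nonneg_pos)
  moreover have "(\<integral>\<^sup>+\<omega>. hitting_time W b \<omega> \<partial>M) \<le> ennreal (ln (max b 1) / c + D)" for b
  proof -
    define B where "B = max b 1"
    define X where "X = K * B powr (-\<gamma>)"
    have "B \<ge> 1"
      unfolding B_def by simp
    then have "B powr (-\<gamma>) \<ge> 1"
      using assms(1) by (intro ge_one_powr_ge_zero) auto
    then have "X \<ge> 1"
      unfolding X_def using mult_mono[OF assms(3)] assms(3) by fastforce
    define A where "A t = {\<omega>\<in>space M. \<forall>s\<le>t. W s \<omega> \<le> b}" for t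
    have [measurable]: "A t \<in> sets M" for t
      unfolding A_def by measurable
    have prob_A: "prob (A t) \<le> min 1 (X * exp (-\<alpha> * real t))" for t
    proof -
      have "prob (A t) \<le> prob {\<omega>\<in>space M. W t \<omega> \<le> B}"
        by (intro finite_measure_mono) (auto simp: A_def B_def)
      also have "\<dots> \<le> (\<integral>\<omega>. W t \<omega> powr \<gamma> \<partial>M) * B powr (-\<gamma>)"
        using assms(1) \<open>B \<ge> 1\<close> pos int by (intro measure_le_integral_powr_neg) auto
      also have "\<dots> \<le> K * exp (c * \<gamma> * real t) * B powr (-\<gamma>)"
        using moment by (intro mult_right_mono) auto
      also have "\<dots> = X * exp (-\<alpha> * real t)"
        unfolding X_def \<alpha>_def by simp
      finally show ?thesis
        by simp
    qed
    have "(\<integral>\<^sup>+\<omega>. hitting_time W b \<omega> \<partial>M) = (\<integral>\<^sup>+\<omega>. (\<Sum>t. indicator (A t) \<omega>) \<partial>M)"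
      by (intro nn_integral_cong) (simp add: hitting_time_eq_suminf_indicator A_def indicator_def)
    also have "\<dots> = (\<Sum>t. emeasure M (A t))"
      by (subst nn_integral_suminf) auto
    also have "\<dots> \<le> (\<Sum>t. ennreal (min 1 (X * exp (-\<alpha> * real t))))"
      using prob_A by (intro suminf_le) (auto simp: emeasure_eq_measure ennreal_leI)
    also have "\<dots> = ennreal (\<Sum>t. min 1 (X * exp (-\<alpha> * real t)))"
      using suminf_min_one_exp_le(1)[OF \<open>\<alpha> > 0\<close> \<open>X \<ge> 1\<close>] \<open>X \<ge> 1\<close>
      by (intro suminf_ennreal2) auto
    also have "\<dots> \<le> ennreal (ln X / \<alpha> + 1 + 1 / (1 - exp (-\<alpha>)))"
      by (intro ennreal_leI suminf_min_one_exp_le(2)[OF \<open>\<alpha> > 0\<close> \<open>X \<ge> 1\<close>])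
    also have "ln X / \<alpha> = ln B / c + ln K / \<alpha>"
      using assms(1-3) \<open>B \<ge> 1\<close> by (simp add: X_def \<alpha>_def ln_mult ln_powr field_simps)
    finally show ?thesis
      unfolding B_def D_def by (simp add: add.assoc)
  qed
  ultimately show ?thesis
    by blast
qed

theorem theorem3:
  fixes M :: "'a measure" and \<gamma> :: real and W :: "nat \<Rightarrow> 'a \<Rightarrow> real" and C :: ereal
  assumes "prob_space M"
    and "\<gamma> < 0"
    and "\<And>t. W t \<in> borel_measurable M"
    and "\<And>t \<omega>. \<omega> \<in> space M \<Longrightarrow> W t \<omega> > 0"
    and "\<And>t. integrable M (\<lambda>\<omega>. W t \<omega> powr \<gamma>)"
    and C_def: "C = liminf (\<lambda>t. ereal (1 / real t * (1 / \<gamma>) * ln (\<integral>\<omega>. W t \<omega> powr \<gamma> \<partial>M)))"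
  shows "(AE \<omega> in M. liminf (\<lambda>t. ereal (1 / real t * ln (W t \<omega>))) \<ge> C) \<and>
         (C > 0 \<longrightarrow>
           (\<forall>b\<ge>0. hitting_time W b \<in> borel_measurable M \<and>
                   (\<integral>\<^sup>+ \<omega>. hitting_time W b \<omega> \<partial>M) < \<infinity>) \<and>
           Limsup at_top (\<lambda>b::real. ereal (enn2real (\<integral>\<^sup>+ \<omega>. hitting_time W b \<omega> \<partial>M) / ln b))
             \<le> inverse C)"
proof -
  interpret prob_space M by fact
  have "0 < (\<integral>\<omega>. W t \<omega> powr \<gamma> \<partial>M)" for t
    using assms(5) by (intro expectation_greater) (auto intro!: AE_I2 dest: assms(4)[THEN less_imp_neq])
  then have moment: "\<exists>K\<ge>1. \<forall>t. (\<integral>\<omega>. W t \<omega> powr \<gamma> \<partial>M) \<le> K * exp (c * \<gamma> * real t)"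
    if "ereal c < C" for c
    using assms(2) that unfolding C_def by (intro le_const_mult_exp_if_less_liminf)
  have hitting: "\<exists>D\<ge>0. \<forall>b. (\<integral>\<^sup>+\<omega>. hitting_time W b \<omega> \<partial>M) \<le> ennreal (ln (max b 1) / c + D)"
    if "0 < c" "ereal c < C" for c
    using moment[OF that(2)] assms(2-5) that(1) by (metis nn_integral_hitting_time_le)
  have "AE \<omega> in M. C \<le> liminf (\<lambda>t. ereal (1 / real t * ln (W t \<omega>)))"
    using assms(2-5) moment by (intro AE_liminf_ln_ge) blast+
  moreover have "\<forall>b\<ge>0. hitting_time W b \<in> borel_measurable M \<and> (\<integral>\<^sup>+ \<omega>. hitting_time W b \<omega> \<partial>M) < \<infinity>"
    if "C > 0"
  proof -
    obtain c where "0 < c" "ereal c < C"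
      using ereal_dense2[OF \<open>C > 0\<close>] by (auto simp: zero_ereal_def)
    with hitting obtain D
      where "\<And>b. (\<integral>\<^sup>+\<omega>. hitting_time W b \<omega> \<partial>M) \<le> ennreal (ln (max b 1) / c + D)"
      by blast
    then show ?thesis
      using assms(3) by (auto intro: le_less_trans[OF _ ennreal_less_top])
  qed
  moreover have "Limsup at_top (\<lambda>b. ereal (enn2real (\<integral>\<^sup>+ \<omega>. hitting_time W b \<omega> \<partial>M) / ln b)) \<le> inverse C"
    if "C > 0"
  proof (rule ereal_le_inverse_if_le_inverse_below[OF that])
    fix c assume "0 < c" "ereal c < C"
    with hitting obtain D where "D \<ge> 0"
      and D: "\<And>b. (\<integral>\<^sup>+\<omega>. hitting_time W b \<omega> \<partial>M) \<le> ennreal (ln (max b 1) / c + D)"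
      by blast
    have "enn2real (\<integral>\<^sup>+ \<omega>. hitting_time W b \<omega> \<partial>M) \<le> ln b / c + D" if "1 \<le> b" for b
      using D[of b] that \<open>0 < c\<close> \<open>D \<ge> 0\<close> by (intro enn2real_leI) (simp_all add: max_absorb1)
    with \<open>0 < c\<close> show "Limsup at_top (\<lambda>b. ereal (enn2real (\<integral>\<^sup>+ \<omega>. hitting_time W b \<omega> \<partial>M) / ln b)) \<le> ereal (1 / c)"
      by (rule Limsup_div_ln_le)
  qed
  ultimately show ?thesis
    by blast
qed

end
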